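(* Let $k \ge 2$ and let $n_1 < n_2 < \dots < n_k$ be positive integers. If the set $\{\rho_g(x) \mid x \in \langle n_1, \dots, n_k\rangle,\ x \neq 0\}$ has a limit point, then this limit point is $n_k/n_1$.
   Context: $\langle n_1,\dots,n_k\rangle$ is the additive submonoid of $\mathbb{N}$ generated by $n_1,\dots,n_k$. For nonzero $x\in\langle n_1,\dots,n_k\rangle$, the generalized set of lengths with respect to the distinguished generators $n_1,\dots,n_k$ is $\mathsf{L}_g(x)=\{c_1+\dots+c_k \mid c_1,\dots,c_k\in\mathbb{N},\ \sum_{i=1}^k c_i n_i = x\}$, and the generalized elasticity is $\rho_g(x)=\max \mathsf{L}_g(x)/\min\mathsf{L}_g(x)$. *)

theory Defs
  imports "HOL-Analysis.Analysis"
begin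

text \<open>Generators n_1 < ... < n_k are given as a list ns (index i corresponds to n_(i+1)).
  A factorization of x is a coefficient list c of the same length with
  sum_i c_i * n_i = x.\<close>

definition factorizations :: "nat list \<Rightarrow> nat \<Rightarrow> nat list set" where
  "factorizations ns x =
     {c. length c = length ns \<and> (\<Sum>i<length ns. c ! i * ns ! i) = x}"

definition num_monoid :: "nat list \<Rightarrow> nat set" where
  "num_monoid ns = {x. factorizations ns x \<noteq> {}}"

definition Lg :: "nat list \<Rightarrow> nat \<Rightarrow> nat set" where
  "Lg ns x = sum_list ` factorizations ns x"

definition rho_g :: "nat list \<Rightarrow> nat \<Rightarrow> real" where
  "rho_g ns x = real (Max (Lg ns x)) / real (Min (Lg ns x))"

end

theory Submission
  imports Defs
begin

text \<open>Let m and M be the smallest and largest generator. Every factorization of x has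
  length between x/M and x/m. Conversely, dividing all other coefficients by a fixed
  generator n_p with remainder and moving the quotients onto n_p yields a factorization
  whose coefficients other than the p-th are below n_p; for p = 1 its length is at least
  (x - O(1))/m, and for p = k it is at most (x + O(1))/M. Hence
  |\<rho>_g(x) - M/m| = O(1/x), so all but finitely many values of \<rho>_g lie in any
  neighbourhood of M/m, and no other point can be a limit point.\<close>

lemma sorted_hd_le_le_last:
  fixes xs :: "'a::linorder list"
  assumes "sorted xs" "y \<in> set xs"
  shows "hd xs \<le> y \<and> y \<le> last xs"
proof
  obtain a t where "xs = a # t" using assms(2) by (cases xs) auto
  then show "hd xs \<le> y" using assms by auto
next
  have "xs \<noteq> []" using assms(2) by auto
  then have "sorted (butlast xs @ [last xs])" "y \<in> set (butlast xs @ [last xs])"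
    using assms by (simp_all add: append_butlast_last_id)
  then show "y \<le> last xs" by (auto simp: sorted_append)
qed

lemma factorizationsD:
  assumes "c \<in> factorizations ns x"
  shows "(\<Sum>i<length ns. c ! i * ns ! i) = x"
    "sum_list c = (\<Sum>i<length ns. c ! i)"
  using assms by (auto simp: factorizations_def sum_list_sum_nth atLeast0LessThan)

lemma Lg_nonempty_iff: "Lg ns x \<noteq> {} \<longleftrightarrow> x \<in> num_monoid ns"
  by (simp add: Lg_def num_monoid_def)

lemma Lg_mult_le:
  assumes "\<forall>n\<in>set ns. m \<le> n" "l \<in> Lg ns x"
  shows "m * l \<le> x"
proof -
  obtain c where c: "c \<in> factorizations ns x" and l: "l = sum_list c"
    using assms(2) by (auto simp: Lg_def)
  have "m * l = (\<Sum>i<length ns. m * c ! i)"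
    by (simp add: l factorizationsD(2)[OF c] sum_distrib_left)
  also have "\<dots> \<le> (\<Sum>i<length ns. c ! i * ns ! i)"
    using assms(1) by (intro sum_mono) (simp add: mult.commute)
  finally show ?thesis using factorizationsD(1)[OF c] by simp
qed

lemma Lg_le_mult:
  assumes "\<forall>n\<in>set ns. n \<le> M" "l \<in> Lg ns x"
  shows "x \<le> M * l"
proof -
  obtain c where c: "c \<in> factorizations ns x" and l: "l = sum_list c"
    using assms(2) by (auto simp: Lg_def)
  have "(\<Sum>i<length ns. c ! i * ns ! i) \<le> (\<Sum>i<length ns. M * c ! i)"
    using assms(1) by (intro sum_mono) (simp add: mult.commute)
  also have "\<dots> = M * l"
    by (simp add: l factorizationsD(2)[OF c] sum_distrib_left)
  finally show ?thesis using factorizationsD(1)[OF c] by simp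
qed

lemma finite_Lg:
  assumes "\<forall>n\<in>set ns. n > 0"
  shows "finite (Lg ns x)"
proof (rule finite_subset)
  show "Lg ns x \<subseteq> {..x}"
    using Lg_mult_le[of ns 1] assms by (auto simp: Suc_le_eq)
qed simp

lemma factorization_with_small_coefficients:
  assumes c: "c \<in> factorizations ns x" and p: "p < length ns" and pos: "ns ! p > 0"
  obtains c' where "c' \<in> factorizations ns x"
    and "\<And>j. j < length ns \<Longrightarrow> j \<noteq> p \<Longrightarrow> c' ! j < ns ! p"
proof -
  define k where "k = length ns"
  define g where "g = ns ! p"
  define K where "K = {..<k} - {p}"
  define f where "f j = (if j = p then c ! p + (\<Sum>i\<in>K. (c ! i div g) * ns ! i) else c ! j mod g)"
    for j
  define c' where "c' = map f [0..<k]"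
  have pk: "p \<in> {..<k}" using p by (simp add: k_def)
  have split: "(\<Sum>i<k. h i) = h p + (\<Sum>i\<in>K. h i)" for h :: "nat \<Rightarrow> nat"
    using sum.remove[OF _ pk, of h] by (simp add: K_def)
  have div_mod: "(c ! i div g * ns ! i) * g + c ! i mod g * ns ! i = c ! i * ns ! i" for i
    by (metis distrib_right div_mult_mod_eq mult.commute mult.left_commute)
  have "(\<Sum>i<k. c' ! i * ns ! i) = f p * g + (\<Sum>i\<in>K. c ! i mod g * ns ! i)"
    by (simp add: c'_def split f_def K_def g_def)
  also have "\<dots> = c ! p * g + (\<Sum>i\<in>K. (c ! i div g * ns ! i) * g + c ! i mod g * ns ! i)"
    by (simp add: f_def distrib_right sum_distrib_right sum.distrib)
  also have "\<dots> = (\<Sum>i<k. c ! i * ns ! i)"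
    by (simp add: div_mod split g_def[symmetric])
  finally have "c' \<in> factorizations ns x"
    using factorizationsD(1)[OF c] by (simp add: factorizations_def c'_def k_def)
  moreover have "c' ! j < g" if "j < k" "j \<noteq> p" for j
    using that pos by (simp add: c'_def f_def g_def)
  ultimately show ?thesis using that by (simp add: k_def g_def)
qed

lemma exists_long_factorization:
  assumes "\<forall>n\<in>set ns. n \<le> M" "p < length ns" "ns ! p > 0" "x \<in> num_monoid ns"
  shows "\<exists>l\<in>Lg ns x. x \<le> ns ! p * l + length ns * ns ! p * M"
proof -
  obtain c where "c \<in> factorizations ns x" using assms(4) by (auto simp: num_monoid_def)
  then obtain c' where c': "c' \<in> factorizations ns x"
    and small: "\<And>j. j < length ns \<Longrightarrow> j \<noteq> p \<Longrightarrow> c' ! j < ns ! p"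
    using factorization_with_small_coefficients assms(2,3) by metis
  have "c' ! i * ns ! i \<le> ns ! p * c' ! i + ns ! p * M" if "i < length ns" for i
  proof (cases "i = p")
    case False
    then have "c' ! i * ns ! i \<le> ns ! p * M"
      using small[OF that] assms(1) that by (intro mult_mono) auto
    then show ?thesis by (rule trans_le_add2)
  qed simp
  then have "(\<Sum>i<length ns. c' ! i * ns ! i) \<le> (\<Sum>i<length ns. ns ! p * c' ! i + ns ! p * M)"
    by (intro sum_mono) simp
  also have "\<dots> = ns ! p * sum_list c' + length ns * ns ! p * M"
    by (simp add: factorizationsD(2)[OF c'] sum.distrib sum_distrib_left)
  finally have "x \<le> ns ! p * sum_list c' + length ns * ns ! p * M"
    by (simp add: factorizationsD(1)[OF c'])
  then show ?thesis using c' by (auto simp: Lg_def)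
qed

lemma exists_short_factorization:
  assumes "p < length ns" "ns ! p > 0" "x \<in> num_monoid ns"
  shows "\<exists>l\<in>Lg ns x. ns ! p * l \<le> x + length ns * ns ! p * ns ! p"
proof -
  obtain c where "c \<in> factorizations ns x" using assms(3) by (auto simp: num_monoid_def)
  then obtain c' where c': "c' \<in> factorizations ns x"
    and small: "\<And>j. j < length ns \<Longrightarrow> j \<noteq> p \<Longrightarrow> c' ! j < ns ! p"
    using factorization_with_small_coefficients assms(1,2) by metis
  have "ns ! p * c' ! i \<le> c' ! i * ns ! i + ns ! p * ns ! p" if "i < length ns" for i
  proof (cases "i = p")
    case False
    then have "ns ! p * c' ! i \<le> ns ! p * ns ! p"
      using small[OF that] by simp
    then show ?thesis by (rule trans_le_add2)
  qed simp
  then have "(\<Sum>i<length ns. ns ! p * c' ! i) \<le> (\<Sum>i<length ns. c' ! i * ns ! i + ns ! p * ns ! p)"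
    by (intro sum_mono) simp
  then have "ns ! p * sum_list c' \<le> (\<Sum>i<length ns. c' ! i * ns ! i + ns ! p * ns ! p)"
    by (simp add: factorizationsD(2)[OF c'] sum_distrib_left)
  also have "\<dots> = x + length ns * ns ! p * ns ! p"
    by (simp add: factorizationsD(1)[OF c'] sum.distrib)
  finally show ?thesis using c' by (auto simp: Lg_def)
qed

lemma ratio_deviation_bound:
  fixes a b X P Q D E :: real
  assumes "a > 0" "X > 0" "Q > 0"
    and "a * P \<le> X" "X \<le> b * Q" "X \<le> a * P + D" "b * Q \<le> X + E"
  shows "\<bar>P / Q - b / a\<bar> \<le> (D + E) * b / a / X"
proof -
  have up: "P / Q \<le> b / a" using assms by (simp add: divide_simps mult.commute)
  have "b / a - P / Q = (b * Q - a * P) / (a * Q)"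
    using assms by (simp add: field_simps)
  also have "\<dots> \<le> (D + E) / a * (1 / Q)"
    using assms by (simp add: divide_right_mono)
  also have "\<dots> \<le> (D + E) / a * (b / X)"
    using assms by (intro mult_left_mono) (simp_all add: divide_simps mult.commute)
  also have "\<dots> = (D + E) * b / a / X" by simp
  finally show ?thesis using up by linarith
qed

lemma rho_g_deviation:
  assumes "m \<in> set ns" "M \<in> set ns" "\<forall>n\<in>set ns. m \<le> n \<and> n \<le> M" "m > 0"
    and "x \<in> num_monoid ns" "x > 0"
  shows "\<bar>rho_g ns x - real M / real m\<bar>
    \<le> real (length ns * M * (m + M)) * real M / real m / real x"
proof -
  define k where "k = length ns"
  define P where "P = Max (Lg ns x)"
  define Q where "Q = Min (Lg ns x)"
  have fin: "finite (Lg ns x)" using assms(3,4) by (intro finite_Lg) (auto intro: less_le_trans)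
  have ne: "Lg ns x \<noteq> {}" using assms(5) by (simp add: Lg_nonempty_iff)
  have P: "P \<in> Lg ns x" and Q: "Q \<in> Lg ns x" using fin ne by (simp_all add: P_def Q_def)
  obtain p q where p: "p < k" "ns ! p = m" and q: "q < k" "ns ! q = M"
    using assms(1,2) by (metis in_set_conv_nth k_def)
  obtain l1 where l1: "l1 \<in> Lg ns x" "x \<le> m * l1 + k * m * M"
    using exists_long_factorization[of ns M p x] p assms by (auto simp: k_def)
  obtain l2 where l2: "l2 \<in> Lg ns x" "M * l2 \<le> x + k * M * M"
    using exists_short_factorization[of q ns x] q assms by (fastforce simp: k_def)
  have "x \<le> m * P + k * m * M"
    using l1 fin P_def by (meson Max_ge add_le_mono1 le_trans mult_le_mono2)
  moreover have "M * Q \<le> x + k * M * M"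
    using l2 fin Q_def by (meson Min_le le_trans mult_le_mono2)
  moreover have "m * P \<le> x" "x \<le> M * Q"
    using Lg_mult_le[OF _ P] Lg_le_mult[OF _ Q] assms(3) by auto
  moreover have "Q > 0" using \<open>x \<le> M * Q\<close> assms(6) by (cases "Q = 0") auto
  ultimately have "\<bar>real P / real Q - real M / real m\<bar>
      \<le> (real (k * m * M) + real (k * M * M)) * real M / real m / real x"
    using assms(4,6) by (intro ratio_deviation_bound) (simp_all flip: of_nat_mult of_nat_add)
  then show ?thesis by (simp add: rho_g_def P_def Q_def k_def algebra_simps)
qed

lemma islimpt_image_eq_of_dist_le_div:
  fixes f :: "nat \<Rightarrow> 'a::metric_space"
  assumes lim: "L islimpt f ` A" and dist: "\<And>x. x \<in> A \<Longrightarrow> dist (f x) c \<le> C / real x"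
  shows "L = c"
proof (rule ccontr)
  assume "L \<noteq> c"
  define e where "e = dist L c / 2"
  define N where "N = nat \<lceil>C / e\<rceil> + 1"
  have "e > 0" using \<open>L \<noteq> c\<close> by (simp add: e_def)
  have "dist (f x) c \<le> e" if "x \<in> A" "N \<le> x" for x
  proof -
    have "C / e < real x"
      using that(2) real_nat_ceiling_ge[of "C / e"] of_nat_le_iff[of N x] by (simp add: N_def)
    then have "C / real x \<le> e" using \<open>e > 0\<close> by (simp add: divide_simps mult.commute)
    then show ?thesis using dist[OF that(1)] by linarith
  qed
  then have "f ` A \<subseteq> f ` {..<N} \<union> cball c e"
    by (force simp: dist_commute not_less)
  then have "L islimpt f ` {..<N} \<union> cball c e" using lim islimpt_subset by blast
  then have "L islimpt cball c e" using islimpt_Un islimpt_finite by blast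
  then have "dist c L \<le> e" using closed_limpt closed_cball mem_cball by blast
  then show False using \<open>e > 0\<close> by (simp add: e_def dist_commute)
qed

theorem lemma5p3:
  fixes ns :: "nat list" and L :: real
  assumes "length ns \<ge> 2"
    and "sorted_wrt (<) ns"
    and "\<forall>n\<in>set ns. n > 0"
    and "L islimpt {rho_g ns x | x. x \<in> num_monoid ns \<and> x \<noteq> 0}"
  shows "L = real (last ns) / real (hd ns)"
proof -
  let ?m = "hd ns" and ?M = "last ns"
  define C where "C = real (length ns * ?M * (?m + ?M)) * real ?M / real ?m"
  have ns: "ns \<noteq> []" using assms(1) by auto
  have bounds: "\<forall>n\<in>set ns. ?m \<le> n \<and> n \<le> ?M"
    using sorted_hd_le_le_last assms(2) strict_sorted_imp_sorted by blast
  have "dist (rho_g ns x) (real ?M / real ?m) \<le> C / real x"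
    if "x \<in> num_monoid ns \<and> x \<noteq> 0" for x
    using rho_g_deviation[OF hd_in_set[OF ns] last_in_set[OF ns] bounds] assms(3) ns that
    by (simp add: C_def dist_real_def)
  then show ?thesis
    using assms(4) by (intro islimpt_image_eq_of_dist_le_div) (auto simp: setcompr_eq_image)
qed

end
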